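(* Let $n\ge 3$ and let $BW_n$ be the gear graph on $2n+1$ vertices. Then $\varphi(BW_n^2)=\frac{1}{2}[(n+1)^2+5]$ if $n$ is even and $\frac{1}{2}(n+1)^2$ if $n$ is odd; $\varphi(BW_n^3)=n(n+1)$ if $n$ is even and $\frac{1}{2}(2n^2+3n+3)$ if $n$ is odd; $\varphi(BW_n^4)=n(2n-1)$.
   Context: All graphs are finite, simple and without isolated vertices. $\mathbb{N}_0$ denotes the set of non-negative integers; for finite $A,B\subseteq\mathbb{N}_0$, $A+B=\{a+b: a\in A, b\in B\}$. An integer additive set-indexer (IASI) of a graph $G$ is an injective map $f$ from $V(G)$ to the finite non-empty subsets of $\mathbb{N}_0$ such that the induced edge map $f^+(uv)=f(u)+f(v)$ is injective on $E(G)$. A weak IASI (WIASI) is an IASI $f$ with $|f^+(uv)|=\max(|f(u)|,|f(v)|)$ for every edge $uv$ (equivalently, for every edge at least one end vertex has a singleton label). A vertex or edge is mono-indexed if its set-label has cardinality $1$. Every graph admits a WIASI. The sparing number $\varphi(G)$ is the minimum, over all WIASIs of $G$, of the number of mono-indexed edges of $G$. The $r$-th power $G^r$ has vertex set $V(G)$, two distinct vertices being adjacent iff their distance in $G$ is at most $r$. The gear graph (bipartite wheel) $BW_n$ is obtained from the wheel $C_n+K_1$ (hub $u$, rim cycle $v_1v_2\cdots v_nv_1$) by inserting a new vertex $w_i$ on each rim edge $v_iv_{i+1}$ (indices mod $n$); thus $u$ is adjacent to each $v_i$, and $w_i$ is adjacent exactly to $v_i$ and $v_{i+1}$. *)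

theory Defs
  imports Complex_Main
begin

definition set_sum :: "nat set \<Rightarrow> nat set \<Rightarrow> nat set" where
  "set_sum A B = {a + b | a b. a \<in> A \<and> b \<in> B}"

definition iasi :: "'a set \<Rightarrow> 'a set set \<Rightarrow> ('a \<Rightarrow> nat set) \<Rightarrow> bool" where
  "iasi V E f \<longleftrightarrow>
     (\<forall>v\<in>V. finite (f v) \<and> f v \<noteq> {}) \<and>
     inj_on f V \<and>
     (\<forall>u v x y. {u, v} \<in> E \<longrightarrow> {x, y} \<in> E \<longrightarrow>
        set_sum (f u) (f v) = set_sum (f x) (f y) \<longrightarrow> {u, v} = {x, y})"

definition wiasi :: "'a set \<Rightarrow> 'a set set \<Rightarrow> ('a \<Rightarrow> nat set) \<Rightarrow> bool" where
  "wiasi V E f \<longleftrightarrow> iasi V E f \<and>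
     (\<forall>u v. {u, v} \<in> E \<longrightarrow> card (set_sum (f u) (f v)) = max (card (f u)) (card (f v)))"

definition mono_edges :: "'a set set \<Rightarrow> ('a \<Rightarrow> nat set) \<Rightarrow> 'a set set" where
  "mono_edges E f = {e \<in> E. \<exists>u v. e = {u, v} \<and> card (set_sum (f u) (f v)) = 1}"

definition sparing_number :: "'a set \<Rightarrow> 'a set set \<Rightarrow> nat" where
  "sparing_number V E = (LEAST k. \<exists>f. wiasi V E f \<and> card (mono_edges E f) = k)"

definition dist_le :: "'a set set \<Rightarrow> nat \<Rightarrow> 'a \<Rightarrow> 'a \<Rightarrow> bool" where
  "dist_le E r u v \<longleftrightarrow> (\<exists>p k. k \<le> r \<and> p 0 = u \<and> p k = v \<and>
       (\<forall>i<k. {p i, p (Suc i)} \<in> E))"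

definition power_edges :: "'a set \<Rightarrow> 'a set set \<Rightarrow> nat \<Rightarrow> 'a set set" where
  "power_edges V E r = {{u, v} | u v. u \<in> V \<and> v \<in> V \<and> u \<noteq> v \<and> dist_le E r u v}"

text \<open>Gear graph BW_n: hub 0, rim vertices v_i = i (1 \<le> i \<le> n),
  subdivision vertices w_i = n + i on the rim edge v_i v_(i+1) (indices mod n).\<close>
definition gear_vertices :: "nat \<Rightarrow> nat set" where
  "gear_vertices n = {0..2 * n}"

definition gear_edges :: "nat \<Rightarrow> nat set set" where
  "gear_edges n =
     {{0, i} | i. 1 \<le> i \<and> i \<le> n} \<union>
     {{i, n + i} | i. 1 \<le> i \<and> i \<le> n} \<union>
     {{n + i, (i mod n) + 1} | i. 1 \<le> i \<and> i \<le> n}"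

end

theory Submission
  imports Defs
begin

text \<open>
  In a weak IASI no edge joins two vertices with non-singleton labels, so these vertices form
  an independent set S, and the mono-indexed edges are exactly the edges missing S. Conversely
  every independent set S arises in this way, from the labelling x \<mapsto> {2^x}, enlarged to
  {2^x, 2^x + 1} for x \<in> S, which separates edges because distinct pairs of powers of two have
  distinct sums. Hence the sparing number is the number of edges minus the largest total degree
  of an independent set.

  In its fourth power all vertices are adjacent.
  In the cube the hub and the rim vertices are adjacent to everything, so an independent set with
  two or more vertices consists of pairwise non-consecutive subdivision vertices, each of degree
  n + 3, at most n div 2 of them. In the square such a set may also contain one rim vertex, of degree n + 2,
  which excludes its two incident subdivision vertices, of degree 5, leaving room for
  (n - 1) div 2 of them. The handshake lemma turns these weights into the three formulas.
\<close>

unbundle bit_operations_syntax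

section \<open>Sumsets\<close>

lemma set_sum_commute: "set_sum A B = set_sum B A"
  unfolding set_sum_def by (auto; metis add.commute)

lemma set_sum_singleton: "set_sum {a} B = (+) a ` B"
  unfolding set_sum_def by auto

lemma finite_set_sum: "finite A \<Longrightarrow> finite B \<Longrightarrow> finite (set_sum A B)"
proof -
  have "set_sum A B = (\<lambda>(a, b). a + b) ` (A \<times> B)"
    unfolding set_sum_def by force
  then show "finite A \<Longrightarrow> finite B \<Longrightarrow> finite (set_sum A B)" by simp
qed

lemma card_le_card_set_sum:
  assumes "finite A" "finite B" "A \<noteq> {}"
  shows "card B \<le> card (set_sum A B)"
proof -
  obtain a where "a \<in> A" using assms(3) by auto
  then have "(+) a ` B \<subseteq> set_sum A B" unfolding set_sum_def by auto
  then have "card ((+) a ` B) \<le> card (set_sum A B)"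
    by (intro card_mono finite_set_sum assms)
  then show ?thesis by (simp add: card_image)
qed

text \<open>The sumset contains the translate Min A + B and, beyond it, Max A + Max B.\<close>
lemma card_less_card_set_sum:
  assumes "finite A" "finite B" "card A \<ge> 2" "B \<noteq> {}"
  shows "card B < card (set_sum A B)"
proof -
  obtain x y where "x \<in> A" "y \<in> A" "x \<noteq> y"
    using assms(1,3) card_le_Suc0_iff_eq[of A] by auto
  moreover have "Min A \<le> x" "Min A \<le> y" "x \<le> Max A" "y \<le> Max A"
    using assms(1) calculation by auto
  ultimately have "Min A < Max A" by linarith
  have "Min A \<in> A" "Max A \<in> A" "Max B \<in> B"
    using assms \<open>x \<in> A\<close> by (auto intro: Min_in Max_in)
  then have sub: "insert (Max A + Max B) ((+) (Min A) ` B) \<subseteq> set_sum A B"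
    unfolding set_sum_def by blast
  have "Max A + Max B \<notin> (+) (Min A) ` B"
    using \<open>Min A < Max A\<close> assms(2) by (auto dest: Max_ge[of B])
  then have "card (insert (Max A + Max B) ((+) (Min A) ` B)) = Suc (card B)"
    using assms(2) by (simp add: card_image)
  moreover have "card (insert (Max A + Max B) ((+) (Min A) ` B)) \<le> card (set_sum A B)"
    by (intro card_mono finite_set_sum assms(1,2) sub)
  ultimately show ?thesis by simp
qed

lemma Min_set_sum:
  assumes "finite A" "finite B" "A \<noteq> {}" "B \<noteq> {}"
  shows "Min (set_sum A B) = Min A + Min B"
proof (rule Min_eqI)
  show "finite (set_sum A B)" using assms by (simp add: finite_set_sum)
  show "\<And>y. y \<in> set_sum A B \<Longrightarrow> Min A + Min B \<le> y"
    unfolding set_sum_def using assms by (auto intro: add_mono)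
  have "Min A \<in> A" "Min B \<in> B" using assms by auto
  then show "Min A + Min B \<in> set_sum A B"
    unfolding set_sum_def by blast
qed

lemma doubleton_eq_if_sum_of_powers_eq:
  fixes a b c d :: nat
  assumes "a \<noteq> b" "c \<noteq> d" "(2::nat) ^ a + 2 ^ b = 2 ^ c + 2 ^ d"
  shows "{a, b} = {c, d}"
proof -
  have "(2::nat) ^ x + 2 ^ y = 2 ^ x OR 2 ^ y" if "x \<noteq> y" for x y
    by (rule disjunctive_add_eq_or) (use that in \<open>auto simp: bit_eq_iff bit_simps\<close>)
  moreover have "{k. bit ((2::nat) ^ x OR 2 ^ y) k} = {x, y}" for x y
    by (auto simp: bit_simps)
  ultimately show ?thesis using assms by metis
qed

section \<open>Graphs given by a symmetric relation\<close>

definition graph_edges :: "'a set \<Rightarrow> ('a \<Rightarrow> 'a \<Rightarrow> bool) \<Rightarrow> 'a set set" where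
  "graph_edges V R = {{a, b} | a b. a \<in> V \<and> b \<in> V \<and> a \<noteq> b \<and> R a b}"

definition degree :: "'a set \<Rightarrow> ('a \<Rightarrow> 'a \<Rightarrow> bool) \<Rightarrow> 'a \<Rightarrow> nat" where
  "degree V R s = card {t \<in> V. t \<noteq> s \<and> R s t}"

definition independent_set :: "('a \<Rightarrow> 'a \<Rightarrow> bool) \<Rightarrow> 'a set \<Rightarrow> bool" where
  "independent_set R S \<longleftrightarrow> (\<forall>a\<in>S. \<forall>b\<in>S. a \<noteq> b \<longrightarrow> \<not> R a b)"

lemma independent_setD: "independent_set R S \<Longrightarrow> a \<in> S \<Longrightarrow> b \<in> S \<Longrightarrow> a \<noteq> b \<Longrightarrow> \<not> R a b"
  unfolding independent_set_def by blast

lemma doubleton_in_graph_edges_iff: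
  assumes "symp R"
  shows "{a, b} \<in> graph_edges V R \<longleftrightarrow> a \<in> V \<and> b \<in> V \<and> a \<noteq> b \<and> R a b"
  using assms unfolding graph_edges_def by (auto simp: doubleton_eq_iff dest: sympD)

lemma graph_edgesE:
  assumes "e \<in> graph_edges V R"
  obtains a b where "e = {a, b}" "a \<in> V" "b \<in> V" "a \<noteq> b" "R a b"
  using assms unfolding graph_edges_def by auto

lemma finite_graph_edges: "finite V \<Longrightarrow> finite (graph_edges V R)"
  by (rule finite_subset[of _ "Pow V"]) (auto elim: graph_edgesE)

lemma card_edges_at_vertex:
  assumes "symp R" "s \<in> V"
  shows "card {e \<in> graph_edges V R. s \<in> e} = degree V R s"
proof -
  have "{e \<in> graph_edges V R. s \<in> e} = (\<lambda>t. {s, t}) ` {t \<in> V. t \<noteq> s \<and> R s t}"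
    using assms unfolding graph_edges_def by (auto dest: sympD)
  moreover have "inj_on (\<lambda>t. {s, t}) {t \<in> V. t \<noteq> s \<and> R s t}"
    by (auto simp: inj_on_def doubleton_eq_iff)
  ultimately show ?thesis unfolding degree_def by (simp add: card_image)
qed

lemma handshake:
  assumes "finite V" "symp R"
  shows "2 * card (graph_edges V R) = (\<Sum>s\<in>V. degree V R s)"
proof -
  have fin: "finite (graph_edges V R)" using assms(1) by (rule finite_graph_edges)
  have "(\<Sum>s\<in>V. degree V R s) = (\<Sum>s\<in>V. \<Sum>e\<in>graph_edges V R. if s \<in> e then 1 else 0)"
    using card_edges_at_vertex[OF assms(2)] fin by (simp add: sum.inter_filter[symmetric])
  also have "\<dots> = (\<Sum>e\<in>graph_edges V R. card {s \<in> V. s \<in> e})"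
    using assms(1) by (subst sum.swap) (simp add: sum.inter_filter[symmetric])
  also have "\<dots> = (\<Sum>e\<in>graph_edges V R. 2)"
  proof (rule sum.cong)
    fix e assume "e \<in> graph_edges V R"
    then obtain a b where "e = {a, b}" "a \<in> V" "b \<in> V" "a \<noteq> b" by (rule graph_edgesE)
    then have "{s \<in> V. s \<in> e} = {a, b}" by auto
    then show "card {s \<in> V. s \<in> e} = 2" using \<open>a \<noteq> b\<close> by simp
  qed simp
  finally show ?thesis by simp
qed

text \<open>An edge meets the independent set S in at most one vertex.\<close>
lemma card_edges_avoiding_independent_set:
  assumes "finite V" "symp R" "S \<subseteq> V" "independent_set R S"
  shows "card {e \<in> graph_edges V R. e \<subseteq> V - S} + (\<Sum>s\<in>S. degree V R s)
    = card (graph_edges V R)"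
proof -
  let ?A = "{e \<in> graph_edges V R. e \<subseteq> V - S}"
  let ?B = "\<Union>s\<in>S. {e \<in> graph_edges V R. s \<in> e}"
  have fin: "finite (graph_edges V R)" "finite S"
    using assms(1,3) finite_graph_edges finite_subset by blast+
  have "\<forall>e\<in>graph_edges V R. e \<subseteq> V" by (auto elim: graph_edgesE)
  then have "graph_edges V R = ?A \<union> ?B" by blast
  moreover have "?A \<inter> ?B = {}" by auto
  moreover have "card ?B = (\<Sum>s\<in>S. card {e \<in> graph_edges V R. s \<in> e})"
  proof (rule card_UN_disjoint)
    show "\<forall>i\<in>S. \<forall>j\<in>S. i \<noteq> j \<longrightarrow> {e \<in> graph_edges V R. i \<in> e} \<inter> {e \<in> graph_edges V R. j \<in> e} = {}"
      using assms(2,4) unfolding independent_set_def by (fastforce elim!: graph_edgesE dest: sympD)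
  qed (use fin in auto)
  ultimately have "card (graph_edges V R) = card ?A + (\<Sum>s\<in>S. card {e \<in> graph_edges V R. s \<in> e})"
    using fin by (metis (no_types, lifting) card_Un_disjoint finite_Un)
  then show ?thesis
    using card_edges_at_vertex[OF assms(2)] assms(3) by (simp add: subset_iff)
qed

section \<open>Sparing number via maximum-weight independent sets\<close>

lemma wiasi_edge_singleton_end:
  assumes "symp R" "wiasi V (graph_edges V R) f" "{u, v} \<in> graph_edges V R"
  shows "card (f u) = 1 \<or> card (f v) = 1"
proof (rule ccontr)
  assume "\<not> ?thesis"
  have "u \<in> V" "v \<in> V"
    using assms(3) by (auto simp: doubleton_in_graph_edges_iff[OF assms(1)])
  then have "finite (f u)" "f u \<noteq> {}" "finite (f v)" "f v \<noteq> {}"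
    using assms(2) unfolding wiasi_def iasi_def by blast+
  with \<open>\<not> ?thesis\<close> have "card (f u) \<ge> 2" "card (f v) \<ge> 2"
    by (metis One_nat_def card_0_eq less_2_cases not_le)+
  then have "card (f v) < card (set_sum (f u) (f v))" "card (f u) < card (set_sum (f v) (f u))"
    using \<open>finite (f u)\<close> \<open>finite (f v)\<close> \<open>f u \<noteq> {}\<close> \<open>f v \<noteq> {}\<close>
    by (auto intro!: card_less_card_set_sum)
  moreover have "card (set_sum (f u) (f v)) = max (card (f u)) (card (f v))"
    using assms(2,3) unfolding wiasi_def by blast
  ultimately show False using set_sum_commute[of "f u"] by simp
qed

lemma wiasi_nonsingleton_vertices:
  assumes "symp R" and f: "wiasi V (graph_edges V R) f"
  defines "S \<equiv> {x \<in> V. card (f x) \<noteq> 1}"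
  shows "independent_set R S" "mono_edges (graph_edges V R) f = {e \<in> graph_edges V R. e \<subseteq> V - S}"
proof -
  show "independent_set R S"
    using wiasi_edge_singleton_end[OF assms(1,2)]
    unfolding independent_set_def S_def by (auto simp: doubleton_in_graph_edges_iff[OF assms(1)])
  have fin: "finite (f v)" "f v \<noteq> {}" "card (f v) \<ge> 1" if "v \<in> V" for v
    using f that unfolding wiasi_def iasi_def by (auto simp: Suc_leI card_gt_0_iff)
  show "mono_edges (graph_edges V R) f = {e \<in> graph_edges V R. e \<subseteq> V - S}"
  proof (intro set_eqI iffI)
    fix e assume "e \<in> mono_edges (graph_edges V R) f"
    then obtain u v where e: "e \<in> graph_edges V R" "e = {u, v}" "card (set_sum (f u) (f v)) = 1"
      unfolding mono_edges_def by blast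
    then have "u \<in> V" "v \<in> V" by (auto elim!: graph_edgesE)
    then have "card (f u) \<le> 1" "card (f v) \<le> 1"
      using e(3) fin card_le_card_set_sum[of "f u" "f v"] card_le_card_set_sum[of "f v" "f u"]
      by (auto simp: set_sum_commute[of "f v"])
    then show "e \<in> {e \<in> graph_edges V R. e \<subseteq> V - S}"
      using e \<open>u \<in> V\<close> \<open>v \<in> V\<close> fin unfolding S_def by (auto intro: le_antisym)
  next
    fix e assume e: "e \<in> {e \<in> graph_edges V R. e \<subseteq> V - S}"
    then obtain a b where "e = {a, b}" by (auto elim: graph_edgesE)
    with e f have "card (set_sum (f a) (f b)) = 1"
      unfolding S_def wiasi_def by auto
    then show "e \<in> mono_edges (graph_edges V R) f"
      unfolding mono_edges_def using e \<open>e = {a, b}\<close> by blast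
  qed
qed

text \<open>Labels and edge labels are told apart by their minima 2 ^ g x and 2 ^ g x + 2 ^ g y.\<close>
definition power_labelling :: "('a \<Rightarrow> nat) \<Rightarrow> 'a set \<Rightarrow> 'a \<Rightarrow> nat set" where
  "power_labelling g S x = (if x \<in> S then {2 ^ g x, 2 ^ g x + 1} else {2 ^ g x})"

lemma power_labelling_simps:
  "Min (power_labelling g S x) = 2 ^ g x"
  "finite (power_labelling g S x)" "power_labelling g S x \<noteq> {}"
  "card (power_labelling g S x) = (if x \<in> S then 2 else 1)"
  unfolding power_labelling_def by auto

lemma wiasi_power_labelling:
  assumes "symp R" "inj_on g V" "independent_set R S"
  shows "wiasi V (graph_edges V R) (power_labelling g S)"
proof -
  let ?f = "power_labelling g S"
  have edge: "u \<in> V" "v \<in> V" "u \<noteq> v" "R u v" if "{u, v} \<in> graph_edges V R" for u v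
    using that by (auto simp: doubleton_in_graph_edges_iff[OF assms(1)])
  have "inj_on ?f V"
  proof (rule inj_onI)
    fix x y assume "x \<in> V" "y \<in> V" "?f x = ?f y"
    then have "(2::nat) ^ g x = 2 ^ g y" by (metis power_labelling_simps(1))
    then show "x = y" using assms(2) \<open>x \<in> V\<close> \<open>y \<in> V\<close> by (simp add: inj_on_eq_iff)
  qed
  moreover have "{u, v} = {x, y}"
    if "{u, v} \<in> graph_edges V R" "{x, y} \<in> graph_edges V R"
      "set_sum (?f u) (?f v) = set_sum (?f x) (?f y)" for u v x y
  proof -
    have "(2::nat) ^ g u + 2 ^ g v = 2 ^ g x + 2 ^ g y"
      using arg_cong[OF that(3), of Min] by (simp add: Min_set_sum power_labelling_simps)
    moreover have "g u \<noteq> g v" "g x \<noteq> g y"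
      using edge[OF that(1)] edge[OF that(2)] inj_onD[OF assms(2)] by metis+
    ultimately have "{g u, g v} = {g x, g y}" by (rule doubleton_eq_if_sum_of_powers_eq[rotated 2])
    then show ?thesis
      using edge[OF that(1)] edge[OF that(2)] inj_onD[OF assms(2)]
      unfolding doubleton_eq_iff by metis
  qed
  moreover have "card (set_sum (?f u) (?f v)) = max (card (?f u)) (card (?f v))"
    if "{u, v} \<in> graph_edges V R" for u v
  proof -
    have "u \<notin> S \<or> v \<notin> S" using assms(3) edge[OF that] unfolding independent_set_def by blast
    then show ?thesis
      by (auto simp: power_labelling_def set_sum_singleton set_sum_commute[of _ "{_}"] card_image)
  qed
  ultimately show ?thesis
    unfolding wiasi_def iasi_def by (simp add: power_labelling_simps)
qed

lemma mono_edges_power_labelling: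
  assumes "symp R" "inj_on g V" "S \<subseteq> V" "independent_set R S"
  shows "mono_edges (graph_edges V R) (power_labelling g S) = {e \<in> graph_edges V R. e \<subseteq> V - S}"
proof -
  let ?f = "power_labelling g S"
  have "{x \<in> V. card (?f x) \<noteq> 1} = S"
    using assms(3) by (auto simp: power_labelling_simps)
  moreover have "mono_edges (graph_edges V R) ?f
      = {e \<in> graph_edges V R. e \<subseteq> V - {x \<in> V. card (?f x) \<noteq> 1}}"
    using assms(1) wiasi_power_labelling[OF assms(1,2,4)] by (rule wiasi_nonsingleton_vertices(2))
  ultimately show ?thesis by simp
qed

theorem sparing_number_max_weight_independent_set:
  assumes "finite V" "symp R" "S\<^sub>0 \<subseteq> V" "independent_set R S\<^sub>0"
    and max: "\<And>S. S \<subseteq> V \<Longrightarrow> independent_set R S \<Longrightarrow>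
      (\<Sum>s\<in>S. degree V R s) \<le> (\<Sum>s\<in>S\<^sub>0. degree V R s)"
  shows "sparing_number V (graph_edges V R) + (\<Sum>s\<in>S\<^sub>0. degree V R s) = card (graph_edges V R)"
proof -
  let ?m = "card (graph_edges V R) - (\<Sum>s\<in>S\<^sub>0. degree V R s)"
  have split0: "card {e \<in> graph_edges V R. e \<subseteq> V - S\<^sub>0} + (\<Sum>s\<in>S\<^sub>0. degree V R s)
      = card (graph_edges V R)"
    using assms(1-4) by (rule card_edges_avoiding_independent_set)
  obtain g :: "'a \<Rightarrow> nat" where g: "inj_on g V"
    using finite_imp_inj_to_nat_seg[OF assms(1)] by blast
  have "sparing_number V (graph_edges V R) = ?m"
    unfolding sparing_number_def
  proof (rule Least_equality)
    show "\<exists>f. wiasi V (graph_edges V R) f \<and> card (mono_edges (graph_edges V R) f) = ?m"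
      using wiasi_power_labelling[OF assms(2) g assms(4)]
        mono_edges_power_labelling[OF assms(2) g assms(3,4)] split0
      by (intro exI[of _ "power_labelling g S\<^sub>0"]) simp
  next
    fix k assume "\<exists>f. wiasi V (graph_edges V R) f \<and> card (mono_edges (graph_edges V R) f) = k"
    then obtain f where f: "wiasi V (graph_edges V R) f" "card (mono_edges (graph_edges V R) f) = k"
      by blast
    let ?S = "{x \<in> V. card (f x) \<noteq> 1}"
    have "independent_set R ?S"
      using assms(2) f(1) by (rule wiasi_nonsingleton_vertices)
    then have "card {e \<in> graph_edges V R. e \<subseteq> V - ?S} + (\<Sum>s\<in>?S. degree V R s)
        = card (graph_edges V R)"
      using assms(1,2) by (intro card_edges_avoiding_independent_set) auto
    moreover have "(\<Sum>s\<in>?S. degree V R s) \<le> (\<Sum>s\<in>S\<^sub>0. degree V R s)"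
      using max \<open>independent_set R ?S\<close> by auto
    ultimately show "?m \<le> k"
      using f wiasi_nonsingleton_vertices(2)[OF assms(2) f(1)] by simp
  qed
  then show ?thesis using split0 by linarith
qed

section \<open>Walks\<close>

lemma dist_le_refl: "dist_le E r a a"
  unfolding dist_le_def by (rule exI[of _ "\<lambda>_. a"], rule exI[of _ 0]) simp

lemma dist_le_edge: "{a, b} \<in> E \<Longrightarrow> dist_le E 1 a b"
  unfolding dist_le_def by (rule exI[of _ "\<lambda>i. if i = 0 then a else b"], rule exI[of _ 1]) simp

lemma dist_le_mono: "dist_le E r a b \<Longrightarrow> r \<le> s \<Longrightarrow> dist_le E s a b"
  unfolding dist_le_def by (blast intro: le_trans)

lemma dist_le_sym:
  assumes "dist_le E r a b"
  shows "dist_le E r b a"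
proof -
  obtain p k where p: "k \<le> r" "p 0 = a" "p k = b" "\<forall>i<k. {p i, p (Suc i)} \<in> E"
    using assms unfolding dist_le_def by blast
  have "{p (k - i), p (k - Suc i)} \<in> E" if "i < k" for i
    using p(4)[rule_format, of "k - Suc i"] that by (simp add: Suc_diff_Suc insert_commute)
  then show ?thesis
    unfolding dist_le_def using p by (intro exI[of _ "\<lambda>i. p (k - i)"] exI[of _ k]) auto
qed

lemma dist_le_append:
  assumes "dist_le E r a b" "dist_le E s b c"
  shows "dist_le E (r + s) a c"
proof -
  obtain p k where p: "k \<le> r" "p 0 = a" "p k = b" "\<forall>i<k. {p i, p (Suc i)} \<in> E"
    using assms(1) unfolding dist_le_def by blast
  obtain q l where q: "l \<le> s" "q 0 = b" "q l = c" "\<forall>i<l. {q i, q (Suc i)} \<in> E"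
    using assms(2) unfolding dist_le_def by blast
  define w where "w i = (if i \<le> k then p i else q (i - k))" for i
  have "{w i, w (Suc i)} \<in> E" if "i < k + l" for i
  proof (cases "i < k")
    case True then show ?thesis using p(4) by (simp add: w_def)
  next
    case False
    then have "{q (i - k), q (Suc (i - k))} \<in> E" using q(4) that by simp
    then show ?thesis using False p(3) q(2) by (cases "i = k") (auto simp: w_def Suc_diff_le)
  qed
  moreover have "w 0 = a" "w (k + l) = c" using p q by (auto simp: w_def)
  ultimately show ?thesis
    unfolding dist_le_def using p(1) q(1) by (intro exI[of _ w] exI[of _ "k + l"]) auto
qed

section \<open>Distances in the gear graph\<close>

definition rim_succ :: "nat \<Rightarrow> nat \<Rightarrow> nat" where
  "rim_succ n j = (if j = n then 1 else j + 1)"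

definition rim_pred :: "nat \<Rightarrow> nat \<Rightarrow> nat" where
  "rim_pred n j = (if j = 1 then n else j - 1)"

lemma rim_succ_bounds: "1 \<le> j \<Longrightarrow> j \<le> n \<Longrightarrow> 1 \<le> rim_succ n j \<and> rim_succ n j \<le> n"
  unfolding rim_succ_def by auto

lemma rim_pred_bounds: "1 \<le> j \<Longrightarrow> j \<le> n \<Longrightarrow> 1 \<le> rim_pred n j \<and> rim_pred n j \<le> n"
  unfolding rim_pred_def by auto

lemma rim_succ_neq: "2 \<le> n \<Longrightarrow> 1 \<le> j \<Longrightarrow> rim_succ n j \<noteq> j"
  unfolding rim_succ_def by auto

lemma rim_pred_neq: "2 \<le> n \<Longrightarrow> 1 \<le> j \<Longrightarrow> j \<le> n \<Longrightarrow> rim_pred n j \<noteq> j"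
  unfolding rim_pred_def by auto

lemma rim_succ_neq_rim_pred: "3 \<le> n \<Longrightarrow> 1 \<le> j \<Longrightarrow> j \<le> n \<Longrightarrow> rim_succ n j \<noteq> rim_pred n j"
  unfolding rim_pred_def rim_succ_def by auto

lemma inj_on_rim_succ: "inj_on (rim_succ n) {1..n}"
  unfolding rim_succ_def inj_on_def by auto

lemma rim_succ_inject:
  "1 \<le> j \<Longrightarrow> j \<le> n \<Longrightarrow> 1 \<le> k \<Longrightarrow> k \<le> n \<Longrightarrow> rim_succ n j = rim_succ n k \<longleftrightarrow> j = k"
  unfolding rim_succ_def by auto

lemma rim_succ_eq_iff: "1 \<le> j \<Longrightarrow> j \<le> n \<Longrightarrow> 1 \<le> k \<Longrightarrow> k \<le> n \<Longrightarrow> j = rim_succ n k \<longleftrightarrow> k = rim_pred n j"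
  unfolding rim_pred_def rim_succ_def by auto

lemma mod_Suc_eq_rim_succ: "1 \<le> j \<Longrightarrow> j \<le> n \<Longrightarrow> j mod n + 1 = rim_succ n j"
  unfolding rim_succ_def by (cases "j = n") auto

lemma gear_vertex_cases:
  fixes a n :: nat
  assumes "a \<le> 2 * n"
  obtains "a = 0" | "1 \<le> a" "a \<le> n" | j where "a = n + j" "1 \<le> j" "j \<le> n"
proof -
  consider "a = 0" | "1 \<le> a" "a \<le> n" | "n < a" by linarith
  then show thesis
  proof cases
    case 3
    then have "a = n + (a - n)" "1 \<le> a - n" "a - n \<le> n" using assms by auto
    then show thesis using that(3) by blast
  qed (use that in blast)+
qed

lemma gear_edges_cases:
  assumes "{x, y} \<in> gear_edges n"
  obtains i where "1 \<le> i" "i \<le> n" "{x, y} = {0, i}"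
    | i j where "1 \<le> j" "j \<le> n" "i = j \<or> i = rim_succ n j" "{x, y} = {i, n + j}"
proof -
  consider i where "1 \<le> i" "i \<le> n" "{x, y} = {0, i}"
    | j where "1 \<le> j" "j \<le> n" "{x, y} = {j, n + j}"
    | j where "1 \<le> j" "j \<le> n" "{x, y} = {rim_succ n j, n + j}"
    using assms mod_Suc_eq_rim_succ unfolding gear_edges_def by (auto simp: insert_commute)
  then show thesis using that by cases blast+
qed

lemma gear_edges_intros:
  assumes "1 \<le> j" "j \<le> n"
  shows "{0, j} \<in> gear_edges n" "{j, n + j} \<in> gear_edges n" "{rim_succ n j, n + j} \<in> gear_edges n"
  using assms mod_Suc_eq_rim_succ[OF assms, symmetric] unfolding gear_edges_def
  by (auto simp: insert_commute)

definition gear_dist :: "nat \<Rightarrow> nat \<Rightarrow> nat \<Rightarrow> nat" where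
  "gear_dist n a b = (if a = b then 0
    else if a = 0 then (if b \<le> n then 1 else 2)
    else if b = 0 then (if a \<le> n then 1 else 2)
    else if a \<le> n \<and> b \<le> n then 2
    else if a \<le> n then (if a = b - n \<or> a = rim_succ n (b - n) then 1 else 3)
    else if b \<le> n then (if b = a - n \<or> b = rim_succ n (a - n) then 1 else 3)
    else if b - n = rim_succ n (a - n) \<or> a - n = rim_succ n (b - n) then 2 else 4)"

lemma gear_dist_commute: "gear_dist n a b = gear_dist n b a"
proof (cases "a = b \<or> a = 0 \<or> b = 0 \<or> a \<le> n \<or> b \<le> n")
  case True then show ?thesis unfolding gear_dist_def by auto
next
  case False then show ?thesis unfolding gear_dist_def by (simp add: disj_commute)
qed

lemma gear_dist_le_4: "gear_dist n a b \<le> 4"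
  unfolding gear_dist_def
  by (simp only: if_distrib[where f = "\<lambda>x. x \<le> 4"] zero_le semiring_norm if_cancel)

lemma gear_dist_hub_le_2: "gear_dist n 0 a \<le> 2"
  unfolding gear_dist_def by simp

lemma gear_dist_simps:
  "gear_dist n a a = 0"
  "1 \<le> i \<Longrightarrow> i \<le> n \<Longrightarrow> gear_dist n 0 i = 1"
  "1 \<le> i \<Longrightarrow> i \<le> n \<Longrightarrow> gear_dist n i 0 = 1"
  "1 \<le> j \<Longrightarrow> gear_dist n 0 (n + j) = 2"
  "1 \<le> j \<Longrightarrow> gear_dist n (n + j) 0 = 2"
  "1 \<le> i \<Longrightarrow> i \<le> n \<Longrightarrow> 1 \<le> k \<Longrightarrow> k \<le> n \<Longrightarrow> gear_dist n i k = (if i = k then 0 else 2)"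
  "1 \<le> i \<Longrightarrow> i \<le> n \<Longrightarrow> 1 \<le> j \<Longrightarrow>
     gear_dist n i (n + j) = (if i = j \<or> i = rim_succ n j then 1 else 3)"
  "1 \<le> i \<Longrightarrow> i \<le> n \<Longrightarrow> 1 \<le> j \<Longrightarrow>
     gear_dist n (n + j) i = (if i = j \<or> i = rim_succ n j then 1 else 3)"
  "1 \<le> j \<Longrightarrow> 1 \<le> k \<Longrightarrow> gear_dist n (n + j) (n + k) =
     (if j = k then 0 else if k = rim_succ n j \<or> j = rim_succ n k then 2 else 4)"
  unfolding gear_dist_def by simp_all

lemma gear_dist_le_3:
  assumes "i \<le> n" "a \<le> 2 * n"
  shows "gear_dist n i a \<le> 3"
proof (cases "i = 0")
  case True then show ?thesis using gear_dist_hub_le_2[of n a] by simp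
next
  case False then show ?thesis
    using assms by (cases rule: gear_vertex_cases[OF assms(2)]) (auto simp: gear_dist_simps)
qed

lemma gear_dist_edge_lipschitz:
  assumes "a \<le> 2 * n" "{x, y} \<in> gear_edges n"
  shows "gear_dist n a y \<le> gear_dist n a x + 1"
  using assms(2)
proof (cases rule: gear_edges_cases)
  case (1 i)
  then show ?thesis
    by (cases rule: gear_vertex_cases[OF assms(1)]) (auto simp: gear_dist_simps doubleton_eq_iff)
next
  case (2 i j)
  then have i: "1 \<le> i" "i \<le> n" using rim_succ_bounds by auto
  show ?thesis
  proof (cases rule: gear_vertex_cases[OF assms(1)])
    case (3 k)
    moreover have "rim_succ n j = rim_succ n k \<longleftrightarrow> j = k"
      using 2 3 by (simp add: rim_succ_inject)
    ultimately show ?thesis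
      using 2 i by (auto simp: gear_dist_simps doubleton_eq_iff)
  qed (use 2 i in \<open>auto simp: gear_dist_simps doubleton_eq_iff\<close>)
qed

lemma gear_dist_le_if_dist_le:
  assumes "a \<le> 2 * n" "dist_le (gear_edges n) r a b"
  shows "gear_dist n a b \<le> r"
proof -
  obtain p k where p: "k \<le> r" "p 0 = a" "p k = b" "\<forall>i<k. {p i, p (Suc i)} \<in> gear_edges n"
    using assms(2) unfolding dist_le_def by blast
  have "gear_dist n a (p i) \<le> i" if "i \<le> k" for i
    using that
  proof (induction i)
    case 0 then show ?case using p(2) by (simp add: gear_dist_simps)
  next
    case (Suc i)
    then show ?case
      using gear_dist_edge_lipschitz[OF assms(1), of "p i" "p (Suc i)"] p(4) by fastforce
  qed
  then show ?thesis using p by fastforce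
qed

lemma dist_le_gear_dist_from_hub:
  assumes "c \<le> 2 * n"
  shows "dist_le (gear_edges n) (gear_dist n 0 c) 0 c"
proof (cases rule: gear_vertex_cases[OF assms])
  case 1 then show ?thesis by (simp add: dist_le_refl)
next
  case 2
  then show ?thesis using dist_le_edge[OF gear_edges_intros(1)[OF 2]] by (simp add: gear_dist_simps)
next
  case (3 j)
  then have "dist_le (gear_edges n) (1 + 1) 0 c"
    using dist_le_append[OF dist_le_edge[OF gear_edges_intros(1)]
        dist_le_edge[OF gear_edges_intros(2)]]
    by simp
  then show ?thesis using 3 by (simp add: gear_dist_simps eval_nat_numeral)
qed

text \<open>Apart from edges and consecutive subdivision vertices, every entry of the distance table
  is realised by a path through the hub.\<close>
lemma dist_le_gear_dist_via_hub:
  assumes "c \<le> 2 * n" "d \<le> 2 * n"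
  shows "dist_le (gear_edges n) (gear_dist n c 0 + gear_dist n 0 d) c d"
  using dist_le_append[OF dist_le_sym[OF dist_le_gear_dist_from_hub[OF assms(1)]]
      dist_le_gear_dist_from_hub[OF assms(2)]]
  by (simp add: gear_dist_commute)

lemma dist_le_gear_dist_rim_sub:
  assumes "1 \<le> i" "i \<le> n" "1 \<le> k" "k \<le> n"
  shows "dist_le (gear_edges n) (gear_dist n i (n + k)) i (n + k)"
proof (cases "i = k \<or> i = rim_succ n k")
  case True
  then have "{i, n + k} \<in> gear_edges n" using gear_edges_intros[OF assms(3,4)] by auto
  then show ?thesis using dist_le_edge assms True by (simp add: gear_dist_simps)
next
  case False
  then show ?thesis
    using dist_le_gear_dist_via_hub[of i n "n + k"] assms
    by (simp add: gear_dist_simps eval_nat_numeral)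
qed

text \<open>Consecutive subdivision vertices are joined through their common rim vertex.\<close>
lemma dist_le_gear_dist_sub_sub:
  assumes "n \<ge> 2" and j: "1 \<le> j" "j \<le> n" and k: "1 \<le> k" "k \<le> n"
  shows "dist_le (gear_edges n) (gear_dist n (n + j) (n + k)) (n + j) (n + k)"
proof -
  let ?E = "gear_edges n"
  have ne: "rim_succ n j \<noteq> j" "rim_succ n k \<noteq> k"
    using assms rim_succ_neq[of n] by auto
  consider "j = k" | "k = rim_succ n j" | "j = rim_succ n k"
    | "j \<noteq> k" "k \<noteq> rim_succ n j" "j \<noteq> rim_succ n k" by blast
  then show ?thesis
  proof cases
    case 1 then show ?thesis by (simp add: dist_le_refl)
  next
    case 2
    then have "dist_le ?E (1 + 1) (n + j) (n + k)"
      using gear_edges_intros[OF j] gear_edges_intros[OF k]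
      by (intro dist_le_append[of _ _ _ k] dist_le_edge) (auto simp: insert_commute)
    then show ?thesis using 2 j k ne by (simp add: gear_dist_simps eval_nat_numeral)
  next
    case 3
    then have "dist_le ?E (1 + 1) (n + j) (n + k)"
      using gear_edges_intros[OF j] gear_edges_intros[OF k]
      by (intro dist_le_append[of _ _ _ j] dist_le_edge) (auto simp: insert_commute)
    then show ?thesis using 3 j k ne by (simp add: gear_dist_simps eval_nat_numeral)
  next
    case 4
    then show ?thesis
      using dist_le_gear_dist_via_hub[of "n + j" n "n + k"] j k
      by (simp add: gear_dist_simps eval_nat_numeral)
  qed
qed

lemma dist_le_gear_dist:
  assumes "n \<ge> 2" "a \<le> 2 * n" "b \<le> 2 * n"
  shows "dist_le (gear_edges n) (gear_dist n a b) a b"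
proof -
  have "dist_le (gear_edges n) (gear_dist n a b) a b"
    if "a \<le> b" and a: "a \<le> 2 * n" and b: "b \<le> 2 * n" for a b
  proof (cases rule: gear_vertex_cases[OF a])
    case 1 then show ?thesis using dist_le_gear_dist_from_hub[OF b] by simp
  next
    case 2
    then show ?thesis
    proof (cases rule: gear_vertex_cases[OF b])
      case 2
      then show ?thesis
        using dist_le_gear_dist_via_hub[OF a b] \<open>1 \<le> a\<close> \<open>a \<le> n\<close>
        by (cases "a = b") (auto simp: gear_dist_simps dist_le_refl eval_nat_numeral)
    next
      case (3 k)
      then show ?thesis using dist_le_gear_dist_rim_sub 2 by simp
    qed (use 2 \<open>a \<le> b\<close> in auto)
  next
    case (3 j)
    moreover obtain k where "b = n + k" "1 \<le> k" "k \<le> n"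
      using \<open>a \<le> b\<close> 3 by (cases rule: gear_vertex_cases[OF b]) auto
    ultimately show ?thesis using dist_le_gear_dist_sub_sub[OF assms(1)] by simp
  qed
  then show ?thesis
    using assms dist_le_sym gear_dist_commute by (metis nat_le_linear)
qed

lemma power_edges_gear:
  assumes "n \<ge> 2"
  shows "power_edges (gear_vertices n) (gear_edges n) r
    = graph_edges {0..2 * n} (\<lambda>a b. gear_dist n a b \<le> r)"
proof -
  have "dist_le (gear_edges n) r a b \<longleftrightarrow> gear_dist n a b \<le> r"
    if "a \<le> 2 * n" "b \<le> 2 * n" for a b
    using gear_dist_le_if_dist_le[OF that(1)] dist_le_mono[OF dist_le_gear_dist[OF assms that]]
    by blast
  then show ?thesis
    unfolding power_edges_def graph_edges_def gear_vertices_def by (intro Collect_cong) auto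
qed

section \<open>Degrees in the powers of the gear graph\<close>

abbreviation gear_power_adj :: "nat \<Rightarrow> nat \<Rightarrow> nat \<Rightarrow> nat \<Rightarrow> bool" where
  "gear_power_adj n r a b \<equiv> gear_dist n a b \<le> r"

lemma symp_gear_power_adj: "symp (gear_power_adj n r)"
  by (rule sympI) (simp add: gear_dist_commute)

lemma degree_universal_vertex:
  assumes "finite V" "s \<in> V" "\<And>t. t \<in> V \<Longrightarrow> R s t"
  shows "degree V R s = card V - 1"
proof -
  have "{t \<in> V. t \<noteq> s \<and> R s t} = V - {s}" using assms(3) by auto
  then show ?thesis unfolding degree_def using assms(1,2) by simp
qed

lemma degree_gear_power_universal:
  assumes "s \<le> 2 * n" "\<And>t. t \<le> 2 * n \<Longrightarrow> gear_dist n s t \<le> r"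
  shows "degree {0..2 * n} (gear_power_adj n r) s = 2 * n"
  using degree_universal_vertex[of "{0..2 * n}" s] assms by simp

lemma degree_gear_cube_sub:
  assumes "n \<ge> 3" "1 \<le> j" "j \<le> n"
  shows "degree {0..2 * n} (gear_power_adj n 3) (n + j) = n + 3"
proof -
  have "{t \<in> {0..2 * n}. t \<noteq> n + j \<and> gear_dist n (n + j) t \<le> 3}
      = {0..n} \<union> {n + rim_succ n j, n + rim_pred n j}"
  proof (intro set_eqI iffI)
    fix t assume t: "t \<in> {t \<in> {0..2 * n}. t \<noteq> n + j \<and> gear_dist n (n + j) t \<le> 3}"
    then have "t \<le> 2 * n" by simp
    then show "t \<in> {0..n} \<union> {n + rim_succ n j, n + rim_pred n j}"
      using t assms
      by (cases rule: gear_vertex_cases)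
        (auto simp: gear_dist_simps rim_succ_eq_iff split: if_splits)
  next
    fix t assume "t \<in> {0..n} \<union> {n + rim_succ n j, n + rim_pred n j}"
    then show "t \<in> {t \<in> {0..2 * n}. t \<noteq> n + j \<and> gear_dist n (n + j) t \<le> 3}"
      using assms rim_succ_bounds[of j n] rim_pred_bounds[of j n] rim_succ_neq[of n j]
        rim_pred_neq[of n j] rim_succ_eq_iff[of j n "rim_pred n j"] gear_dist_le_3[of t n "n + j"]
      by (auto simp: gear_dist_simps gear_dist_commute[of n "n + j"])
  qed
  moreover have "rim_succ n j \<noteq> rim_pred n j" "1 \<le> rim_succ n j" "1 \<le> rim_pred n j"
    using assms rim_succ_neq_rim_pred rim_succ_bounds rim_pred_bounds by auto
  ultimately show ?thesis unfolding degree_def by simp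
qed

lemma degree_gear_square_rim:
  assumes "n \<ge> 3" "1 \<le> i" "i \<le> n"
  shows "degree {0..2 * n} (gear_power_adj n 2) i = n + 2"
proof -
  have "{t \<in> {0..2 * n}. t \<noteq> i \<and> gear_dist n i t \<le> 2}
      = insert 0 ({1..n} - {i}) \<union> {n + i, n + rim_pred n i}"
  proof (intro set_eqI iffI)
    fix t assume t: "t \<in> {t \<in> {0..2 * n}. t \<noteq> i \<and> gear_dist n i t \<le> 2}"
    then have "t \<le> 2 * n" by simp
    then show "t \<in> insert 0 ({1..n} - {i}) \<union> {n + i, n + rim_pred n i}"
      using t assms
      by (cases rule: gear_vertex_cases)
        (auto simp: gear_dist_simps rim_succ_eq_iff split: if_splits)
  next
    fix t assume "t \<in> insert 0 ({1..n} - {i}) \<union> {n + i, n + rim_pred n i}"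
    then show "t \<in> {t \<in> {0..2 * n}. t \<noteq> i \<and> gear_dist n i t \<le> 2}"
      using assms rim_pred_bounds[of i n] rim_succ_eq_iff[of i n "rim_pred n i"]
      by (auto simp: gear_dist_simps)
  qed
  moreover have "1 \<le> rim_pred n i" "rim_pred n i \<noteq> i" "card ({1..n} - {i}) = n - 1"
    using assms rim_pred_bounds rim_pred_neq by auto
  ultimately show ?thesis unfolding degree_def using assms by simp
qed

lemma degree_gear_square_sub:
  assumes "n \<ge> 3" "1 \<le> j" "j \<le> n"
  shows "degree {0..2 * n} (gear_power_adj n 2) (n + j) = 5"
proof -
  have "{t \<in> {0..2 * n}. t \<noteq> n + j \<and> gear_dist n (n + j) t \<le> 2}
      = {0, j, rim_succ n j, n + rim_succ n j, n + rim_pred n j}"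
  proof (intro set_eqI iffI)
    fix t assume t: "t \<in> {t \<in> {0..2 * n}. t \<noteq> n + j \<and> gear_dist n (n + j) t \<le> 2}"
    then have "t \<le> 2 * n" by simp
    then show "t \<in> {0, j, rim_succ n j, n + rim_succ n j, n + rim_pred n j}"
      using t assms
      by (cases rule: gear_vertex_cases)
        (auto simp: gear_dist_simps rim_succ_eq_iff split: if_splits)
  next
    fix t assume "t \<in> {0, j, rim_succ n j, n + rim_succ n j, n + rim_pred n j}"
    then show "t \<in> {t \<in> {0..2 * n}. t \<noteq> n + j \<and> gear_dist n (n + j) t \<le> 2}"
      using assms rim_succ_bounds[of j n] rim_pred_bounds[of j n] rim_succ_neq[of n j]
        rim_pred_neq[of n j] rim_succ_eq_iff[of j n "rim_pred n j"]
      by (auto simp: gear_dist_simps)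
  qed
  moreover have "rim_succ n j \<noteq> rim_pred n j" "rim_succ n j \<noteq> j" "rim_pred n j \<noteq> j"
      "1 \<le> rim_succ n j" "rim_succ n j \<le> n" "1 \<le> rim_pred n j"
    using assms rim_succ_neq_rim_pred rim_succ_neq rim_pred_neq rim_succ_bounds rim_pred_bounds
    by auto
  ultimately show ?thesis unfolding degree_def using assms by simp
qed

lemma sum_gear_vertices:
  fixes g :: "nat \<Rightarrow> 'a::comm_monoid_add"
  shows "(\<Sum>s\<in>{0..2 * n}. g s) = g 0 + (\<Sum>i = 1..n. g i) + (\<Sum>j = 1..n. g (n + j))"
proof -
  have "{0..2 * n} = insert 0 ({1..n} \<union> (+) n ` {1..n})"
    by (auto elim!: gear_vertex_cases[of _ n])
  moreover have "(\<Sum>s\<in>(+) n ` {1..n}. g s) = (\<Sum>j = 1..n. g (n + j))"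
    by (subst sum.reindex) auto
  ultimately show ?thesis by (simp add: sum.union_disjoint add.assoc)
qed

lemma degree_sum_gear_square:
  assumes "n \<ge> 3"
  shows "(\<Sum>s\<in>{0..2 * n}. degree {0..2 * n} (gear_power_adj n 2) s)
    = 2 * n + n * (n + 2) + n * 5"
  using assms gear_dist_hub_le_2
  by (simp add: sum_gear_vertices degree_gear_power_universal degree_gear_square_rim
      degree_gear_square_sub)

lemma degree_sum_gear_cube:
  assumes "n \<ge> 3"
  shows "(\<Sum>s\<in>{0..2 * n}. degree {0..2 * n} (gear_power_adj n 3) s)
    = 2 * n + n * (2 * n) + n * (n + 3)"
  using assms gear_dist_le_3
  by (simp add: sum_gear_vertices degree_gear_power_universal degree_gear_cube_sub)

lemma degree_sum_gear_fourth:
  "(\<Sum>s\<in>{0..2 * n}. degree {0..2 * n} (gear_power_adj n 4) s) = (2 * n + 1) * (2 * n)"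
proof -
  have "degree {0..2 * n} (gear_power_adj n 4) s = 2 * n" if "s \<in> {0..2 * n}" for s
    using that by (intro degree_gear_power_universal) (auto intro: gear_dist_le_4)
  then show ?thesis by simp
qed

section \<open>Maximum-weight independent sets in the powers\<close>

lemma independent_set_subset: "independent_set R S \<Longrightarrow> T \<subseteq> S \<Longrightarrow> independent_set R T"
  unfolding independent_set_def by blast

lemma independent_set_eq_singleton:
  assumes "x \<in> S" "S \<subseteq> V" "independent_set R S" "\<And>y. y \<in> V \<Longrightarrow> R x y"
  shows "S = {x}"
proof -
  have "y = x" if "y \<in> S" for y
  proof (rule ccontr)
    assume "y \<noteq> x"
    then have "\<not> R x y" using independent_setD[OF assms(3,1) that] by simp
    moreover have "R x y" using assms(2,4) that by blast
    ultimately show False by simp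
  qed
  then show ?thesis using assms(1) by blast
qed

lemma card_no_consecutive:
  assumes J: "J \<subseteq> {1..n}" "\<forall>j\<in>J. rim_succ n j \<notin> J"
    and X: "X \<subseteq> {1..n}" "X \<inter> J = {}" "X \<inter> rim_succ n ` J = {}"
  shows "2 * card J + card X \<le> n"
proof -
  let ?K = "rim_succ n ` J"
  have fin: "finite J" "finite X" using J(1) X(1) finite_subset by blast+
  have "card ?K = card J"
    using card_image[OF inj_on_subset[OF inj_on_rim_succ J(1)]] .
  moreover have "J \<inter> ?K = {}" using J(2) by blast
  ultimately have "card (J \<union> ?K) = 2 * card J"
    using fin(1) by (simp add: card_Un_disjoint)
  moreover have "(J \<union> ?K) \<inter> X = {}" using X(2,3) by blast
  ultimately have "card (J \<union> ?K \<union> X) = 2 * card J + card X"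
    using fin by (simp add: card_Un_disjoint)
  moreover have "?K \<subseteq> {1..n}"
  proof (rule image_subsetI)
    fix j assume "j \<in> J"
    then have "1 \<le> j" "j \<le> n" using J(1) by auto
    then show "rim_succ n j \<in> {1..n}" using rim_succ_bounds by simp
  qed
  then have "card (J \<union> ?K \<union> X) \<le> card {1..n}"
    using J(1) X(1) by (intro card_mono) auto
  ultimately show ?thesis by simp
qed

lemma sub_vertices_image:
  fixes n :: nat
  assumes "S \<subseteq> {0..2 * n}" "\<forall>s\<in>S. n < s"
  obtains J where "J \<subseteq> {1..n}" "S = (+) n ` J"
proof
  show "(\<lambda>s. s - n) ` S \<subseteq> {1..n}" using assms by force
  show "S = (+) n ` (\<lambda>s. s - n) ` S" using assms(2) by (force simp: image_image)
qed

lemma no_consecutive_if_independent_sub_vertices: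
  assumes "n \<ge> 3" "r \<ge> 2" "J \<subseteq> {1..n}" "independent_set (gear_power_adj n r) ((+) n ` J)"
  shows "\<forall>j\<in>J. rim_succ n j \<notin> J"
proof (intro ballI notI)
  fix j assume "j \<in> J" "rim_succ n j \<in> J"
  moreover have "1 \<le> j" "j \<le> n" using \<open>j \<in> J\<close> assms(3) by auto
  moreover have "rim_succ n j \<noteq> j" "1 \<le> rim_succ n j"
    using calculation assms(1) rim_succ_neq[of n j] rim_succ_bounds[of j n] by auto
  moreover have "gear_dist n (n + j) (n + rim_succ n j) = 2"
    using calculation by (simp add: gear_dist_simps)
  ultimately show False using assms(2,4) unfolding independent_set_def by fastforce
qed

lemma sum_sub_vertices_const:
  fixes n :: nat
  assumes "\<And>j. j \<in> J \<Longrightarrow> g (n + j) = c"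
  shows "(\<Sum>s\<in>(+) n ` J. g s) = c * card J"
  using assms by (subst sum.reindex) (auto simp: inj_on_def)

lemma max_weight_gear_fourth:
  assumes "S \<subseteq> {0..2 * n}" "independent_set (gear_power_adj n 4) S"
  shows "(\<Sum>s\<in>S. degree {0..2 * n} (gear_power_adj n 4) s) \<le> 2 * n"
proof (cases "S = {}")
  case False
  then obtain x where "x \<in> S" by blast
  then have "S = {x}"
    using assms by (rule independent_set_eq_singleton) (rule gear_dist_le_4)
  moreover have "degree {0..2 * n} (gear_power_adj n 4) x = 2 * n"
    using \<open>x \<in> S\<close> assms(1) by (intro degree_gear_power_universal) (auto intro: gear_dist_le_4)
  ultimately show ?thesis by simp
qed simp

lemma max_weight_gear_cube:
  assumes "n \<ge> 3" "S \<subseteq> {0..2 * n}" "independent_set (gear_power_adj n 3) S"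
  shows "(\<Sum>s\<in>S. degree {0..2 * n} (gear_power_adj n 3) s) \<le> (n + 3) * (n div 2)"
proof (cases "\<exists>x\<in>S. x \<le> n")
  case True
  then obtain x where x: "x \<in> S" "x \<le> n" by blast
  have "S = {x}"
    using x(1) assms(2,3)
    by (rule independent_set_eq_singleton) (use x(2) in \<open>auto intro: gear_dist_le_3\<close>)
  moreover have "degree {0..2 * n} (gear_power_adj n 3) x = 2 * n"
    using x(2) by (intro degree_gear_power_universal gear_dist_le_3) auto
  moreover have "2 * n \<le> (n + 3) * (n div 2)"
  proof -
    have k: "1 \<le> n div 2" "n \<le> 2 * (n div 2) + 1" using assms(1) by auto
    then have "n \<le> n * (n div 2)" by simp
    then show ?thesis using k by (simp only: distrib_right)
  qed
  ultimately show ?thesis by simp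
next
  case False
  then have "\<forall>s\<in>S. n < s" by auto
  with assms(2) obtain J where J: "J \<subseteq> {1..n}" "S = (+) n ` J"
    by (rule sub_vertices_image)
  then have "2 * card J \<le> n"
    using card_no_consecutive[of J n "{}"] no_consecutive_if_independent_sub_vertices[of n 3 J]
      assms
    by simp
  moreover have "(\<Sum>s\<in>S. degree {0..2 * n} (gear_power_adj n 3) s) = (n + 3) * card J"
    unfolding J(2)
    by (rule sum_sub_vertices_const, rule degree_gear_cube_sub) (use assms(1) J(1) in auto)
  ultimately show ?thesis by simp
qed

lemma independent_set_gear_square_with_rim:
  assumes "n \<ge> 3" "S \<subseteq> {0..2 * n}" "independent_set (gear_power_adj n 2) S"
    and i: "i \<in> S" "1 \<le> i" "i \<le> n"
  obtains J where "J \<subseteq> {1..n}" "S - {i} = (+) n ` J" "\<forall>j\<in>J. rim_succ n j \<notin> J"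
    "i \<notin> J" "rim_pred n i \<notin> J"
proof -
  have far: "\<not> gear_dist n i s \<le> 2" if "s \<in> S - {i}" for s
    using independent_setD[OF assms(3) i(1), of s] that by blast
  have "S - {i} \<subseteq> {0..2 * n}" using assms(2) by blast
  moreover have "\<forall>s\<in>S - {i}. n < s"
  proof
    fix s assume s: "s \<in> S - {i}"
    show "n < s"
    proof (rule ccontr)
      assume "\<not> n < s"
      then have "gear_dist n i s \<le> 2"
        using s i by (cases "s = 0") (auto simp: gear_dist_simps)
      then show False using far[OF s] by simp
    qed
  qed
  ultimately obtain J where J: "J \<subseteq> {1..n}" "S - {i} = (+) n ` J"
    by (rule sub_vertices_image)
  moreover have "\<forall>j\<in>J. rim_succ n j \<notin> J"
    using assms(1) J independent_set_subset[OF assms(3), of "S - {i}"]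
    by (intro no_consecutive_if_independent_sub_vertices) auto
  moreover have "gear_dist n i (n + i) \<le> 2" "gear_dist n i (n + rim_pred n i) \<le> 2"
    using i rim_pred_bounds[of i n] rim_succ_eq_iff[of i n "rim_pred n i"]
    by (simp_all add: gear_dist_simps)
  then have "n + i \<notin> S - {i}" "n + rim_pred n i \<notin> S - {i}"
    using far by blast+
  then have "i \<notin> J" "rim_pred n i \<notin> J"
    unfolding J(2) by auto
  ultimately show thesis by (rule that)
qed

lemma max_weight_gear_square_with_rim:
  assumes "n \<ge> 3" "S \<subseteq> {0..2 * n}" "independent_set (gear_power_adj n 2) S"
    and i: "i \<in> S" "1 \<le> i" "i \<le> n"
  shows "(\<Sum>s\<in>S. degree {0..2 * n} (gear_power_adj n 2) s) \<le> (n + 2) + 5 * ((n - 1) div 2)"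
proof -
  obtain J where J: "J \<subseteq> {1..n}" "S - {i} = (+) n ` J" "\<forall>j\<in>J. rim_succ n j \<notin> J"
      "i \<notin> J" "rim_pred n i \<notin> J"
    using independent_set_gear_square_with_rim[OF assms] .
  have "{i} \<inter> rim_succ n ` J = {}"
  proof (rule ccontr)
    assume "{i} \<inter> rim_succ n ` J \<noteq> {}"
    then obtain j where "j \<in> J" "i = rim_succ n j" by blast
    then have "j = rim_pred n i" using J(1) i rim_succ_eq_iff[of i n j] by auto
    then show False using \<open>j \<in> J\<close> J(5) by simp
  qed
  then have "2 * card J + 1 \<le> n"
    using card_no_consecutive[OF J(1,3), of "{i}"] i J(4) by simp
  then have "card J \<le> (n - 1) div 2" using div_le_mono[of "2 * card J" "n - 1" 2] by simp
  moreover have "(\<Sum>s\<in>S. degree {0..2 * n} (gear_power_adj n 2) s) = (n + 2) + 5 * card J"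
  proof -
    have "finite S" using assms(2) finite_subset by blast
    then have "(\<Sum>s\<in>S. degree {0..2 * n} (gear_power_adj n 2) s)
        = degree {0..2 * n} (gear_power_adj n 2) i
          + (\<Sum>s\<in>S - {i}. degree {0..2 * n} (gear_power_adj n 2) s)"
      using i(1) by (rule sum.remove)
    also have "(\<Sum>s\<in>S - {i}. degree {0..2 * n} (gear_power_adj n 2) s) = 5 * card J"
      unfolding J(2)
      by (rule sum_sub_vertices_const, rule degree_gear_square_sub) (use assms(1) J(1) in auto)
    finally show ?thesis using degree_gear_square_rim[OF assms(1) i(2,3)] by simp
  qed
  ultimately show ?thesis by linarith
qed

lemma max_weight_gear_square:
  assumes "n \<ge> 3" "S \<subseteq> {0..2 * n}" "independent_set (gear_power_adj n 2) S"
  shows "(\<Sum>s\<in>S. degree {0..2 * n} (gear_power_adj n 2) s) \<le> (n + 2) + 5 * ((n - 1) div 2)"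
proof -
  have bounds: "2 * n \<le> (n + 2) + 5 * ((n - 1) div 2)"
      "5 * (n div 2) \<le> (n + 2) + 5 * ((n - 1) div 2)"
    using assms(1) by linarith+
  have "\<forall>s\<in>S. n < s" if "0 \<notin> S" "\<not> (\<exists>i\<in>S. 1 \<le> i \<and> i \<le> n)"
  proof
    fix s assume "s \<in> S"
    then have "s \<noteq> 0" "\<not> (1 \<le> s \<and> s \<le> n)"
      using that by metis+
    then show "n < s" by linarith
  qed
  then consider "0 \<in> S" | i where "i \<in> S" "1 \<le> i" "i \<le> n" | "\<forall>s\<in>S. n < s"
    by blast
  then show ?thesis
  proof cases
    case 1
    then have "S = {0}"
      using assms(2,3) by (rule independent_set_eq_singleton) (rule gear_dist_hub_le_2)
    moreover have "degree {0..2 * n} (gear_power_adj n 2) 0 = 2 * n"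
      by (intro degree_gear_power_universal gear_dist_hub_le_2) simp
    ultimately show ?thesis using bounds by simp
  next
    case 2
    then show ?thesis using assms by (intro max_weight_gear_square_with_rim)
  next
    case 3
    with assms(2) obtain J where J: "J \<subseteq> {1..n}" "S = (+) n ` J"
      by (rule sub_vertices_image)
    then have "2 * card J \<le> n"
      using card_no_consecutive[of J n "{}"] no_consecutive_if_independent_sub_vertices[of n 2 J]
        assms
      by simp
    then have "card J \<le> n div 2" using div_le_mono[of "2 * card J" n 2] by simp
    moreover have "(\<Sum>s\<in>S. degree {0..2 * n} (gear_power_adj n 2) s) = 5 * card J"
      unfolding J(2)
      by (rule sum_sub_vertices_const, rule degree_gear_square_sub) (use assms(1) J(1) in auto)
    ultimately show ?thesis using bounds by linarith
  qed
qed

text \<open>The maximum-weight independent sets are formed by the even-indexed subdivision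
  vertices, together with a rim vertex in the square.\<close>
lemma independent_set_even_sub_vertices:
  assumes "r \<le> 3" "2 * m \<le> n"
  shows "independent_set (gear_power_adj n r) ((+) n ` (*) 2 ` {1..m})"
proof -
  have "gear_dist n (n + 2 * j) (n + 2 * k) = 4" if "j \<in> {1..m}" "k \<in> {1..m}" "j \<noteq> k" for j k
    using that assms(2) by (auto simp: gear_dist_simps rim_succ_def)
  then show ?thesis using assms(1) unfolding independent_set_def by fastforce
qed

lemma twice_sparing_number_gear_power:
  assumes "n \<ge> 3" "S\<^sub>0 \<subseteq> {0..2 * n}" "independent_set (gear_power_adj n r) S\<^sub>0"
    and weight: "(\<Sum>s\<in>S\<^sub>0. degree {0..2 * n} (gear_power_adj n r) s) = w"
    and max: "\<And>S. S \<subseteq> {0..2 * n} \<Longrightarrow> independent_set (gear_power_adj n r) S \<Longrightarrow>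
      (\<Sum>s\<in>S. degree {0..2 * n} (gear_power_adj n r) s) \<le> w"
  shows "2 * sparing_number (gear_vertices n)
      (power_edges (gear_vertices n) (gear_edges n) r) + 2 * w
    = (\<Sum>s\<in>{0..2 * n}. degree {0..2 * n} (gear_power_adj n r) s)"
proof -
  have "sparing_number {0..2 * n} (graph_edges {0..2 * n} (gear_power_adj n r)) + w
      = card (graph_edges {0..2 * n} (gear_power_adj n r))"
    using sparing_number_max_weight_independent_set[OF _ symp_gear_power_adj assms(2,3)] weight max
    by simp
  moreover have "n \<ge> 2" using assms(1) by simp
  ultimately show ?thesis
    unfolding power_edges_gear[OF \<open>n \<ge> 2\<close>] unfolding gear_vertices_def
    using handshake[OF _ symp_gear_power_adj, of "{0..2 * n}" n r] by simp
qed

lemma square_count_arith: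
  fixes n x :: nat
  assumes "n \<ge> 3" "2 * x + 2 * ((n + 2) + 5 * ((n - 1) div 2)) = 2 * n + n * (n + 2) + n * 5"
  shows "2 * x = (if even n then (n + 1)^2 + 5 else (n + 1)^2)"
proof (cases "even n")
  case True
  then obtain m where "n = 2 * m" by (rule evenE)
  define k where "k = m - 1"
  have k: "n = 2 * k + 2" using \<open>n = 2 * m\<close> assms(1) unfolding k_def by simp
  then have "(n - 1) div 2 = k" by simp
  then show ?thesis using assms(2) True unfolding k by (simp add: power2_eq_square algebra_simps)
next
  case False
  then obtain k where k: "n = 2 * k + 1" using oddE by blast
  then have "(n - 1) div 2 = k" by simp
  then show ?thesis using assms(2) False unfolding k by (simp add: power2_eq_square algebra_simps)
qed

lemma twice_sparing_number_gear_square: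
  assumes "n \<ge> 3"
  shows "2 * sparing_number (gear_vertices n)
      (power_edges (gear_vertices n) (gear_edges n) 2)
    = (if even n then (n + 1)^2 + 5 else (n + 1)^2)"
proof -
  let ?m = "(n - 1) div 2"
  let ?S = "insert 1 ((+) n ` (*) 2 ` {1..?m})"
  have "independent_set (gear_power_adj n 2) ((+) n ` (*) 2 ` {1..?m})"
    by (rule independent_set_even_sub_vertices) auto
  moreover have "gear_dist n 1 (n + 2 * j) = 3" "gear_dist n (n + 2 * j) 1 = 3"
    if "j \<in> {1..?m}" for j
  proof -
    have "1 \<le> j" "2 * j < n" using that by auto
    then show "gear_dist n 1 (n + 2 * j) = 3" "gear_dist n (n + 2 * j) 1 = 3"
      using assms by (simp_all add: gear_dist_simps rim_succ_def)
  qed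
  ultimately have "independent_set (gear_power_adj n 2) ?S"
    unfolding independent_set_def by fastforce
  moreover have "(\<Sum>s\<in>?S. degree {0..2 * n} (gear_power_adj n 2) s) = (n + 2) + 5 * ?m"
  proof -
    have "(\<Sum>s\<in>(+) n ` (*) 2 ` {1..?m}. degree {0..2 * n} (gear_power_adj n 2) s) = 5 * ?m"
      by (subst sum_sub_vertices_const[where c = 5], rule degree_gear_square_sub)
        (use assms in \<open>auto simp: card_image inj_on_def\<close>)
    moreover have "1 \<notin> (+) n ` (*) 2 ` {1..?m}" using assms by auto
    ultimately show ?thesis using degree_gear_square_rim[OF assms, of 1] assms by simp
  qed
  moreover have "?S \<subseteq> {0..2 * n}" using assms by auto
  ultimately have "2 * sparing_number (gear_vertices n)
      (power_edges (gear_vertices n) (gear_edges n) 2)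
      + 2 * ((n + 2) + 5 * ?m) = 2 * n + n * (n + 2) + n * 5"
    using twice_sparing_number_gear_power[OF assms] max_weight_gear_square[OF assms]
      degree_sum_gear_square[OF assms] by metis
  then show ?thesis by (rule square_count_arith[OF assms])
qed

lemma cube_count_arith:
  fixes n x :: nat
  assumes "2 * x + 2 * ((n + 3) * (n div 2)) = 2 * n + n * (2 * n) + n * (n + 3)"
  shows "2 * x = (if even n then 2 * (n * (n + 1)) else 2 * n^2 + 3 * n + 3)"
proof (cases "even n")
  case True
  then obtain k where k: "n = 2 * k" by (rule evenE)
  then have "n div 2 = k" by simp
  then show ?thesis using assms True unfolding k by (simp add: power2_eq_square algebra_simps)
next
  case False
  then obtain k where k: "n = 2 * k + 1" by (rule oddE)
  then have "n div 2 = k" by simp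
  then show ?thesis using assms False unfolding k by (simp add: power2_eq_square algebra_simps)
qed

lemma twice_sparing_number_gear_cube:
  assumes "n \<ge> 3"
  shows "2 * sparing_number (gear_vertices n)
      (power_edges (gear_vertices n) (gear_edges n) 3)
    = (if even n then 2 * (n * (n + 1)) else 2 * n^2 + 3 * n + 3)"
proof -
  let ?S = "(+) n ` (*) 2 ` {1..n div 2}"
  have "independent_set (gear_power_adj n 3) ?S"
    by (rule independent_set_even_sub_vertices) auto
  moreover have "(\<Sum>s\<in>?S. degree {0..2 * n} (gear_power_adj n 3) s) = (n + 3) * (n div 2)"
    by (subst sum_sub_vertices_const[where c = "n + 3"], rule degree_gear_cube_sub)
      (use assms in \<open>auto simp: card_image inj_on_def\<close>)
  moreover have "?S \<subseteq> {0..2 * n}" by auto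
  ultimately have "2 * sparing_number (gear_vertices n)
      (power_edges (gear_vertices n) (gear_edges n) 3)
      + 2 * ((n + 3) * (n div 2)) = 2 * n + n * (2 * n) + n * (n + 3)"
    using twice_sparing_number_gear_power[OF assms] max_weight_gear_cube[OF assms]
      degree_sum_gear_cube[OF assms] by metis
  then show ?thesis by (rule cube_count_arith)
qed

lemma sparing_number_gear_fourth:
  assumes "n \<ge> 3"
  shows "sparing_number (gear_vertices n) (power_edges (gear_vertices n) (gear_edges n) 4)
    = n * (2 * n - 1)"
proof -
  have "independent_set (gear_power_adj n 4) {0}" unfolding independent_set_def by simp
  moreover have "(\<Sum>s\<in>{0}. degree {0..2 * n} (gear_power_adj n 4) s) = 2 * n"
    by (simp, intro degree_gear_power_universal gear_dist_le_4) simp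
  ultimately have "2 * sparing_number (gear_vertices n)
      (power_edges (gear_vertices n) (gear_edges n) 4)
      + 2 * (2 * n) = (\<Sum>s\<in>{0..2 * n}. degree {0..2 * n} (gear_power_adj n 4) s)"
    by (intro twice_sparing_number_gear_power[OF assms _ _ _ max_weight_gear_fourth]) auto
  then have "2 * sparing_number (gear_vertices n)
      (power_edges (gear_vertices n) (gear_edges n) 4)
      + 2 * (2 * n) = (2 * n + 1) * (2 * n)"
    by (simp only: degree_sum_gear_fourth)
  moreover obtain m where "n = Suc m" using assms by (cases n) auto
  ultimately show ?thesis by (simp add: algebra_simps)
qed

theorem mainTheorem10:
  fixes n :: nat
  assumes "n \<ge> 3"
  shows "real (sparing_number (gear_vertices n) (power_edges (gear_vertices n) (gear_edges n) 2)) =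
           (if even n then (real ((n + 1)^2) + 5) / 2 else real ((n + 1)^2) / 2) \<and>
         real (sparing_number (gear_vertices n) (power_edges (gear_vertices n) (gear_edges n) 3)) =
           (if even n then real (n * (n + 1)) else real (2 * n^2 + 3 * n + 3) / 2) \<and>
         sparing_number (gear_vertices n) (power_edges (gear_vertices n) (gear_edges n) 4) =
           n * (2 * n - 1)"
proof -
  have half: "real x = real y / 2" if "2 * x = y" for x y :: nat
    using that by linarith
  show ?thesis
    using half[OF twice_sparing_number_gear_square[OF assms]]
      half[OF twice_sparing_number_gear_cube[OF assms]] sparing_number_gear_fourth[OF assms]
    by (simp split: if_splits)
qed

end
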